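(* For every positive integer $n$, there exists a constant $C_n\le 1$ such that $\prod_{i=1}^n x_i+C_n\in M_{2\lceil n/2\rceil}(g_1,\dots,g_n)$, where $g_i:=x_i(1-x_i)$ for $i=1,\dots,n$.
   Context: $\Sigma[\mathbf{x}]$ denotes the set of sums of squares of real polynomials in $\mathbf{x}=(x_1,\dots,x_n)$. For an integer $r$, the $r$-truncated quadratic module is $M_r(g_1,\dots,g_n):=\{\sigma_0+\sum_{i=1}^n\sigma_i g_i:\ \sigma_i\in\Sigma[\mathbf{x}],\ \deg\sigma_0\le r,\ \deg(\sigma_i g_i)\le r\}$. *)

theory Defs
  imports Complex_Main "HOL-Library.Poly_Mapping"
begin

text \<open>Real multivariate polynomials in the variables x_1, x_2, ... represented as finitely
  supported maps from monomials (exponent vectors nat =>0 nat) to real coefficients.\<close>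

type_synonym mpoly = "(nat \<Rightarrow>\<^sub>0 nat) \<Rightarrow>\<^sub>0 real"

definition Var :: "nat \<Rightarrow> mpoly" where
  "Var i = Poly_Mapping.single (Poly_Mapping.single i 1) 1"

definition Const :: "real \<Rightarrow> mpoly" where
  "Const c = Poly_Mapping.single 0 c"

text \<open>Total degree of a monomial and of a polynomial (degree of 0 is taken to be 0).\<close>

definition mdeg :: "(nat \<Rightarrow>\<^sub>0 nat) \<Rightarrow> nat" where
  "mdeg m = (\<Sum>i\<in>Poly_Mapping.keys m. Poly_Mapping.lookup m i)"

definition tdeg :: "mpoly \<Rightarrow> nat" where
  "tdeg p = Max (insert 0 (mdeg ` Poly_Mapping.keys p))"

definition in_vars :: "nat \<Rightarrow> mpoly \<Rightarrow> bool" where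
  "in_vars n p \<longleftrightarrow> (\<forall>m\<in>Poly_Mapping.keys p. Poly_Mapping.keys m \<subseteq> {1..n})"

definition SOS :: "nat \<Rightarrow> mpoly set" where
  "SOS n = {p. \<exists>qs. (\<forall>q\<in>set qs. in_vars n q) \<and> p = sum_list (map (\<lambda>q. q ^ 2) qs)}"

definition trunc_qmodule :: "nat \<Rightarrow> nat \<Rightarrow> (nat \<Rightarrow> mpoly) \<Rightarrow> mpoly set" where
  "trunc_qmodule r n g =
     {\<sigma>0 + (\<Sum>i=1..n. \<sigma> i * g i) | \<sigma>0 \<sigma>.
        \<sigma>0 \<in> SOS n \<and> tdeg \<sigma>0 \<le> r \<and>
        (\<forall>i\<in>{1..n}. \<sigma> i \<in> SOS n \<and> tdeg (\<sigma> i * g i) \<le> r)}"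

end

theory Submission
  imports Defs
begin

text \<open>
  Take \<open>C = 1\<close>, \<open>k = \<lceil>n/2\<rceil>\<close> and write \<open>x\<^sub>1\<cdots>x\<^sub>n = u v\<close> with \<open>u = x\<^sub>1\<cdots>x\<^sub>k\<close>,
  \<open>v = x\<^sub>k\<^sub>+\<^sub>1\<cdots>x\<^sub>n\<close>. Then \<open>u v + 1 = (u + v)\<^sup>2/2 + (1 - u\<^sup>2)/2 + (1 - v\<^sup>2)/2\<close>, and the first
  term is a square of degree at most \<open>2k\<close>. For a block \<open>y\<^sub>1\<cdots>y\<^sub>m\<close> of \<open>m \<le> k\<close> variables with
  prefix products \<open>p\<^sub>j = y\<^sub>1\<cdots>y\<^sub>j\<^sub>-\<^sub>1\<close>, the telescoping identity
  \<open>(1 - (y\<^sub>1\<cdots>y\<^sub>m)\<^sup>2)/2 = \<Sum>\<^sub>j (p\<^sub>j\<^sup>2 (1 - y\<^sub>j)\<^sup>2/2 + p\<^sub>j\<^sup>2 y\<^sub>j(1 - y\<^sub>j))\<close>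
  writes the other two terms as squares of degree at most \<open>2m\<close> plus squares times the generators
  \<open>y\<^sub>j(1 - y\<^sub>j)\<close> of total degree at most \<open>2m\<close>.
\<close>

lemma mdeg_add: "mdeg (a + b) = mdeg a + mdeg b"
  unfolding mdeg_def by (rule setsum_keys_plus_distrib[where f = "\<lambda>k v. v"]) auto

lemma mdeg_zero [simp]: "mdeg 0 = 0"
  by (simp add: mdeg_def)

lemma tdeg_le_iff: "tdeg p \<le> d \<longleftrightarrow> (\<forall>m\<in>Poly_Mapping.keys p. mdeg m \<le> d)"
  by (simp add: tdeg_def)

lemma mdeg_le_tdeg: "m \<in> Poly_Mapping.keys p \<Longrightarrow> mdeg m \<le> tdeg p"
  using tdeg_le_iff[of p "tdeg p"] by blast

lemma tdeg_add_le: "tdeg (p + q) \<le> max (tdeg p) (tdeg q)"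
  unfolding tdeg_le_iff using keys_add[of p q] mdeg_le_tdeg[of _ p] mdeg_le_tdeg[of _ q]
  by (fastforce simp: le_max_iff_disj)

lemma tdeg_uminus [simp]: "tdeg (- p) = tdeg p"
  by (simp add: tdeg_def)

lemma tdeg_diff_le: "tdeg (p - q) \<le> max (tdeg p) (tdeg q)"
  using tdeg_add_le[of p "- q"] by simp

lemma tdeg_mult_le: "tdeg (p * q) \<le> tdeg p + tdeg q"
  unfolding tdeg_le_iff
proof
  fix m assume "m \<in> Poly_Mapping.keys (p * q)"
  then obtain a b where "m = a + b" "a \<in> Poly_Mapping.keys p" "b \<in> Poly_Mapping.keys q"
    using keys_mult[of p q] by blast
  then show "mdeg m \<le> tdeg p + tdeg q"
    by (simp add: mdeg_add add_mono mdeg_le_tdeg)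
qed

lemma tdeg_prod_le: "tdeg (\<Prod>i\<in>A. f i) \<le> (\<Sum>i\<in>A. tdeg (f i))"
proof (induction A rule: infinite_finite_induct)
  case (insert x F)
  then show ?case using tdeg_mult_le[of "f x" "prod f F"] by simp
qed (simp_all add: tdeg_def)

lemma tdeg_Const [simp]: "tdeg (Const c) = 0"
  by (simp add: tdeg_def Const_def)

lemma tdeg_zero [simp]: "tdeg 0 = 0"
  by (simp add: tdeg_def)

lemma tdeg_one [simp]: "tdeg 1 = 0"
  by (simp add: tdeg_def)

lemma tdeg_Var [simp]: "tdeg (Var i) = 1"
  by (simp add: tdeg_def Var_def mdeg_def)

lemma tdeg_prod_Var: "tdeg (\<Prod>i\<in>A. Var i) \<le> card A"
  using tdeg_prod_le[of Var A] by simp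

lemma tdeg_one_minus_Var: "tdeg (1 - Var i) \<le> 1"
  using tdeg_diff_le[of 1 "Var i"] by simp

lemma tdeg_power2_le: "tdeg (q ^ 2) \<le> 2 * tdeg q"
  using tdeg_mult_le[of q q] by (simp add: power2_eq_square)

lemma in_vars_add: "in_vars n p \<Longrightarrow> in_vars n q \<Longrightarrow> in_vars n (p + q)"
  unfolding in_vars_def using keys_add[of p q] by blast

lemma in_vars_diff: "in_vars n p \<Longrightarrow> in_vars n q \<Longrightarrow> in_vars n (p - q)"
  unfolding in_vars_def using keys_diff[of p q] by blast

lemma in_vars_mult:
  assumes "in_vars n p" "in_vars n q"
  shows "in_vars n (p * q)"
  unfolding in_vars_def
proof
  fix m assume "m \<in> Poly_Mapping.keys (p * q)"
  then obtain a b where "m = a + b" "a \<in> Poly_Mapping.keys p" "b \<in> Poly_Mapping.keys q"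
    using keys_mult[of p q] by blast
  then show "Poly_Mapping.keys m \<subseteq> {1..n}"
    using assms keys_add[of a b] unfolding in_vars_def by blast
qed

lemma in_vars_one [simp]: "in_vars n 1"
  by (simp add: in_vars_def)

lemma in_vars_Const [simp]: "in_vars n (Const c)"
  by (simp add: in_vars_def Const_def)

lemma in_vars_Var: "i \<in> {1..n} \<Longrightarrow> in_vars n (Var i)"
  by (simp add: in_vars_def Var_def)

lemma in_vars_prod: "(\<And>i. i \<in> A \<Longrightarrow> in_vars n (f i)) \<Longrightarrow> in_vars n (\<Prod>i\<in>A. f i)"
  by (induction A rule: infinite_finite_induct) (simp_all add: in_vars_mult)

lemma zero_in_SOS: "0 \<in> SOS n"
  unfolding SOS_def by (rule CollectI, rule exI[of _ "[]"]) simp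

lemma SOS_add:
  assumes "p \<in> SOS n" "q \<in> SOS n"
  shows "p + q \<in> SOS n"
proof -
  obtain ps qs where "\<forall>r\<in>set ps. in_vars n r" "p = sum_list (map (\<lambda>r. r ^ 2) ps)"
    and "\<forall>r\<in>set qs. in_vars n r" "q = sum_list (map (\<lambda>r. r ^ 2) qs)"
    using assms unfolding SOS_def by blast
  then show ?thesis
    unfolding SOS_def by (intro CollectI exI[of _ "ps @ qs"]) auto
qed

lemma square_in_SOS: "in_vars n q \<Longrightarrow> q ^ 2 \<in> SOS n"
  unfolding SOS_def by (intro CollectI exI[of _ "[q]"]) simp

lemma trunc_qmoduleI:
  assumes "\<sigma>0 \<in> SOS n" "tdeg \<sigma>0 \<le> r"
    and "\<And>i. i \<in> {1..n} \<Longrightarrow> \<sigma> i \<in> SOS n \<and> tdeg (\<sigma> i * g i) \<le> r"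
  shows "\<sigma>0 + (\<Sum>i=1..n. \<sigma> i * g i) \<in> trunc_qmodule r n g"
  unfolding trunc_qmodule_def using assms by blast

lemma trunc_qmoduleE:
  assumes "p \<in> trunc_qmodule r n g"
  obtains \<sigma>0 \<sigma> where "p = \<sigma>0 + (\<Sum>i=1..n. \<sigma> i * g i)" "\<sigma>0 \<in> SOS n" "tdeg \<sigma>0 \<le> r"
    and "\<And>i. i \<in> {1..n} \<Longrightarrow> \<sigma> i \<in> SOS n \<and> tdeg (\<sigma> i * g i) \<le> r"
  using assms unfolding trunc_qmodule_def by (elim CollectE exE conjE) (rule that; blast)

lemma zero_in_trunc_qmodule: "0 \<in> trunc_qmodule r n g"
  using trunc_qmoduleI[of 0 n r "\<lambda>_. 0" g] by (simp add: zero_in_SOS)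

lemma trunc_qmodule_add:
  assumes "p \<in> trunc_qmodule r n g" "q \<in> trunc_qmodule r n g"
  shows "p + q \<in> trunc_qmodule r n g"
proof -
  obtain \<sigma>0 \<sigma> where p: "p = \<sigma>0 + (\<Sum>i=1..n. \<sigma> i * g i)" "\<sigma>0 \<in> SOS n" "tdeg \<sigma>0 \<le> r"
    and \<sigma>: "\<And>i. i \<in> {1..n} \<Longrightarrow> \<sigma> i \<in> SOS n \<and> tdeg (\<sigma> i * g i) \<le> r"
    using assms(1) by (rule trunc_qmoduleE) blast
  obtain \<tau>0 \<tau> where q: "q = \<tau>0 + (\<Sum>i=1..n. \<tau> i * g i)" "\<tau>0 \<in> SOS n" "tdeg \<tau>0 \<le> r"
    and \<tau>: "\<And>i. i \<in> {1..n} \<Longrightarrow> \<tau> i \<in> SOS n \<and> tdeg (\<tau> i * g i) \<le> r"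
    using assms(2) by (rule trunc_qmoduleE) blast
  have "p + q = (\<sigma>0 + \<tau>0) + (\<Sum>i=1..n. (\<sigma> i + \<tau> i) * g i)"
    unfolding p q by (simp add: distrib_right sum.distrib algebra_simps)
  also have "\<dots> \<in> trunc_qmodule r n g"
  proof (rule trunc_qmoduleI)
    show "\<sigma>0 + \<tau>0 \<in> SOS n" using p q by (simp add: SOS_add)
    show "tdeg (\<sigma>0 + \<tau>0) \<le> r" using p q tdeg_add_le[of \<sigma>0 \<tau>0] by linarith
    fix i assume "i \<in> {1..n}"
    then show "\<sigma> i + \<tau> i \<in> SOS n \<and> tdeg ((\<sigma> i + \<tau> i) * g i) \<le> r"
      using \<sigma>[of i] \<tau>[of i] tdeg_add_le[of "\<sigma> i * g i" "\<tau> i * g i"]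
      by (auto simp: SOS_add distrib_right)
  qed
  finally show ?thesis .
qed

lemma sum_in_trunc_qmodule:
  "(\<And>j. j \<in> A \<Longrightarrow> f j \<in> trunc_qmodule r n g) \<Longrightarrow> (\<Sum>j\<in>A. f j) \<in> trunc_qmodule r n g"
  by (induction A rule: infinite_finite_induct)
    (simp_all add: zero_in_trunc_qmodule trunc_qmodule_add)

lemma square_in_trunc_qmodule:
  assumes "in_vars n q" "2 * tdeg q \<le> r"
  shows "q ^ 2 \<in> trunc_qmodule r n g"
  using trunc_qmoduleI[of "q ^ 2" n r "\<lambda>_. 0" g] assms tdeg_power2_le[of q]
  by (simp add: square_in_SOS zero_in_SOS)

lemma square_mult_in_trunc_qmodule:
  assumes "i \<in> {1..n}" "in_vars n q" "2 * tdeg q + tdeg (g i) \<le> r"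
  shows "q ^ 2 * g i \<in> trunc_qmodule r n g"
proof -
  define \<sigma> where "\<sigma> j = (if j = i then q ^ 2 else 0)" for j
  have "tdeg (q ^ 2 * g i) \<le> r"
    using tdeg_mult_le[of "q ^ 2" "g i"] tdeg_power2_le[of q] assms(3) by linarith
  then have "0 + (\<Sum>j=1..n. \<sigma> j * g j) \<in> trunc_qmodule r n g"
    using assms(2) by (intro trunc_qmoduleI) (auto simp: \<sigma>_def zero_in_SOS square_in_SOS)
  moreover have "(\<Sum>j=1..n. \<sigma> j * g j) = q ^ 2 * g i"
    using assms(1) by (simp add: \<sigma>_def if_distrib[of "\<lambda>x. x * g _"] cong: if_cong)
  ultimately show ?thesis by simp
qed

lemma mult_plus_one_eq_squares:
  fixes u v c :: "'a::comm_ring_1"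
  assumes "2 * c ^ 2 = 1"
  shows "u * v + 1 = (c * (u + v)) ^ 2 + c ^ 2 * (1 - u ^ 2) + c ^ 2 * (1 - v ^ 2)"
proof -
  have "(c * (u + v)) ^ 2 + c ^ 2 * (1 - u ^ 2) + c ^ 2 * (1 - v ^ 2) = 2 * c ^ 2 * (u * v + 1)"
    by (simp add: algebra_simps power2_eq_square)
  then show ?thesis using assms by simp
qed

lemma one_minus_prod_square_telescope:
  fixes f :: "nat \<Rightarrow> 'a::comm_ring_1" and c :: 'a
  assumes "2 * c ^ 2 = 1" "s \<le> b"
  shows "c ^ 2 * (1 - (\<Prod>i\<in>{s..<b}. f i) ^ 2) =
    (\<Sum>j\<in>{s..<b}. (c * (\<Prod>i\<in>{s..<j}. f i) * (1 - f j)) ^ 2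
                   + (\<Prod>i\<in>{s..<j}. f i) ^ 2 * (f j * (1 - f j)))"
  using assms(2)
proof (induction b rule: dec_induct)
  case (step b)
  define p where "p = (\<Prod>i\<in>{s..<b}. f i)"
  have "c ^ 2 * (1 - (p * f b) ^ 2) = c ^ 2 * (1 - p ^ 2)
      + (c * p * (1 - f b)) ^ 2 + 2 * c ^ 2 * (p ^ 2 * (f b * (1 - f b)))"
    by (simp add: algebra_simps power2_eq_square)
  then show ?case
    using step assms(1) by (simp add: p_def prod.atLeastLessThan_Suc sum.atLeastLessThan_Suc)
qed simp

lemma Const_mult: "Const a * Const b = Const (a * b)"
  by (simp add: Const_def mult_single)

lemma Const_one: "Const 1 = 1"
  by (simp add: Const_def)

lemma Const_add: "Const a + Const b = Const (a + b)"
  by (simp add: Const_def single_add)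

lemma two_mult_Const_sqrt_half_square: "2 * Const (sqrt (1 / 2)) ^ 2 = 1"
proof -
  have "Const (sqrt (1 / 2)) ^ 2 = Const (1 / 2)"
    by (simp add: power2_eq_square Const_mult)
  then show ?thesis
    by (simp add: mult_2 Const_add Const_one)
qed

lemma tdeg_box_generator: "tdeg (Var i * (1 - Var i)) \<le> 2"
  using tdeg_mult_le[of "Var i" "1 - Var i"] tdeg_one_minus_Var[of i] by simp

lemma in_vars_prod_Var: "A \<subseteq> {1..n} \<Longrightarrow> in_vars n (\<Prod>i\<in>A. Var i)"
  by (intro in_vars_prod in_vars_Var) blast

lemma one_minus_prod_Var_square_in_trunc_qmodule:
  fixes c :: mpoly
  defines "c \<equiv> Const (sqrt (1 / 2))"
  assumes "1 \<le> s" "s \<le> b" "b \<le> n + 1" "b - s \<le> k"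
  shows "c ^ 2 * (1 - (\<Prod>i\<in>{s..<b}. Var i) ^ 2)
           \<in> trunc_qmodule (2 * k) n (\<lambda>i. Var i * (1 - Var i))"
proof -
  let ?p = "\<lambda>j. \<Prod>i\<in>{s..<j}. Var i"
  have "c ^ 2 * (1 - (\<Prod>i\<in>{s..<b}. Var i) ^ 2) =
    (\<Sum>j\<in>{s..<b}. (c * ?p j * (1 - Var j)) ^ 2 + ?p j ^ 2 * (Var j * (1 - Var j)))"
    unfolding c_def using two_mult_Const_sqrt_half_square assms(3)
    by (rule one_minus_prod_square_telescope)
  also have "\<dots> \<in> trunc_qmodule (2 * k) n (\<lambda>i. Var i * (1 - Var i))"
  proof (intro sum_in_trunc_qmodule trunc_qmodule_add)
    fix j assume j: "j \<in> {s..<b}"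
    then have j_var: "j \<in> {1..n}" and p_vars: "in_vars n (?p j)"
      using assms by (auto intro!: in_vars_prod_Var)
    have p_deg: "tdeg (?p j) + 1 \<le> k"
      using tdeg_prod_Var[of "{s..<j}"] j assms by auto
    have "tdeg (c * ?p j * (1 - Var j)) \<le> tdeg c + tdeg (?p j) + tdeg (1 - Var j)"
      using tdeg_mult_le[of "c * ?p j" "1 - Var j"] tdeg_mult_le[of c "?p j"] by linarith
    then show "(c * ?p j * (1 - Var j)) ^ 2 \<in> trunc_qmodule (2 * k) n (\<lambda>i. Var i * (1 - Var i))"
      using p_vars j_var p_deg tdeg_one_minus_Var[of j]
      by (intro square_in_trunc_qmodule) (auto simp: c_def intro!: in_vars_mult in_vars_diff in_vars_Var)
    show "?p j ^ 2 * (Var j * (1 - Var j)) \<in> trunc_qmodule (2 * k) n (\<lambda>i. Var i * (1 - Var i))"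
      using j_var p_vars p_deg tdeg_box_generator[of j]
      by (intro square_mult_in_trunc_qmodule[where g = "\<lambda>i. Var i * (1 - Var i)", simplified]) auto
  qed
  finally show ?thesis .
qed

lemma square_prod_Var_sum_in_trunc_qmodule:
  assumes "A \<subseteq> {1..n}" "B \<subseteq> {1..n}" "card A \<le> k" "card B \<le> k"
  shows "(Const a * ((\<Prod>i\<in>A. Var i) + (\<Prod>i\<in>B. Var i))) ^ 2 \<in> trunc_qmodule (2 * k) n g"
proof (rule square_in_trunc_qmodule)
  show "in_vars n (Const a * ((\<Prod>i\<in>A. Var i) + (\<Prod>i\<in>B. Var i)))"
    using assms by (simp add: in_vars_mult in_vars_add in_vars_prod_Var)
  have "tdeg ((\<Prod>i\<in>A. Var i) + (\<Prod>i\<in>B. Var i)) \<le> k"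
    using tdeg_add_le[of "\<Prod>i\<in>A. Var i" "\<Prod>i\<in>B. Var i"] tdeg_prod_Var[of A] tdeg_prod_Var[of B] assms
    by linarith
  then show "2 * tdeg (Const a * ((\<Prod>i\<in>A. Var i) + (\<Prod>i\<in>B. Var i))) \<le> 2 * k"
    using tdeg_mult_le[of "Const a"] by (metis add_0 mult_le_mono2 order_trans tdeg_Const)
qed

theorem lemma2:
  fixes n :: nat
  assumes "n \<ge> 1"
  shows "\<exists>C::real. C \<le> 1 \<and>
           (\<Prod>i=1..n. Var i) + Const C
             \<in> trunc_qmodule (2 * nat \<lceil>real n / 2\<rceil>) n (\<lambda>i. Var i * (1 - Var i))"
proof (intro exI conjI)
  define k where "k = nat \<lceil>real n / 2\<rceil>"
  have "k \<le> n" "n \<le> 2 * k"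
    using assms unfolding k_def by linarith+
  define c where "c = Const (sqrt (1 / 2))"
  define u where "u = (\<Prod>i\<in>{1..<k+1}. Var i)"
  define v where "v = (\<Prod>i\<in>{k+1..<n+1}. Var i)"
  have "(\<Prod>i=1..n. Var i) + Const 1 = u * v + 1"
    using \<open>k \<le> n\<close> prod.atLeastLessThan_concat[of 1 "k + 1" "n + 1" Var]
    by (simp add: u_def v_def Const_one atLeastLessThanSuc_atLeastAtMost[symmetric])
  also have "\<dots> = (c * (u + v)) ^ 2 + c ^ 2 * (1 - u ^ 2) + c ^ 2 * (1 - v ^ 2)"
    unfolding c_def by (intro mult_plus_one_eq_squares two_mult_Const_sqrt_half_square)
  also have "\<dots> \<in> trunc_qmodule (2 * k) n (\<lambda>i. Var i * (1 - Var i))"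
  proof (intro trunc_qmodule_add)
    show "(c * (u + v)) ^ 2 \<in> trunc_qmodule (2 * k) n (\<lambda>i. Var i * (1 - Var i))"
      unfolding c_def u_def v_def
      by (rule square_prod_Var_sum_in_trunc_qmodule) (use \<open>k \<le> n\<close> \<open>n \<le> 2 * k\<close> in auto)
    show "c ^ 2 * (1 - u ^ 2) \<in> trunc_qmodule (2 * k) n (\<lambda>i. Var i * (1 - Var i))"
      unfolding c_def u_def
      by (rule one_minus_prod_Var_square_in_trunc_qmodule) (use \<open>k \<le> n\<close> in simp_all)
    show "c ^ 2 * (1 - v ^ 2) \<in> trunc_qmodule (2 * k) n (\<lambda>i. Var i * (1 - Var i))"
      unfolding c_def v_def
      by (rule one_minus_prod_Var_square_in_trunc_qmodule) (use \<open>k \<le> n\<close> \<open>n \<le> 2 * k\<close> in simp_all)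
  qed
  finally show "(\<Prod>i=1..n. Var i) + Const 1
      \<in> trunc_qmodule (2 * nat \<lceil>real n / 2\<rceil>) n (\<lambda>i. Var i * (1 - Var i))"
    unfolding k_def .
qed simp

end
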